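(* Let $G$ be a finite group of odd order. Then $\mathrm{cp}(G)\geq\lambda_3(G)^2$.
   Context: For an integer $e$ and a finite group $G$, $\lambda_e(G)$ denotes the maximum over all automorphisms $\alpha$ of $G$ of $|\{g\in G:\alpha(g)=g^e\}|/|G|$. $\mathrm{cp}(G)$ denotes the commuting probability of $G$, i.e. $|\{(x,y)\in G^2: xy=yx\}|/|G|^2$. *)

theory Defs
  imports "HOL-Algebra.Algebra"
begin

definition comm_prob :: "('a, 'b) monoid_scheme \<Rightarrow> real" where
  "comm_prob G =
     real (card {(x, y). x \<in> carrier G \<and> y \<in> carrier G \<and> x \<otimes>\<^bsub>G\<^esub> y = y \<otimes>\<^bsub>G\<^esub> x})
     / real (card (carrier G)) ^ 2"

definition lambda_e :: "int \<Rightarrow> ('a, 'b) monoid_scheme \<Rightarrow> real" where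
  "lambda_e e G =
     Max ((\<lambda>\<alpha>. real (card {g \<in> carrier G. \<alpha> g = g [^]\<^bsub>G\<^esub> e}) / real (card (carrier G)))
          ` iso G G)"

end

theory Submission
  imports Defs
begin

text \<open>Let \<open>\<alpha>\<close> be an automorphism attaining \<open>\<lambda>\<^sub>3(G)\<close>, \<open>S = {g. \<alpha> g = g\<^sup>3}\<close> and \<open>F\<close> the
  fixed points of \<open>\<alpha>\<close>. Squaring is injective in a group of odd order, and
  \<open>\<alpha>(s f) = s\<^sup>3 f\<close> recovers \<open>s\<^sup>2\<close> from \<open>s f\<close>, so \<open>|S| |F| \<le> |G|\<close>. If \<open>x\<close> and \<open>h x h\<^sup>-\<^sup>1\<close>
  both lie in \<open>S\<close>, applying \<open>\<alpha>\<close> shows that \<open>h\<^sup>-\<^sup>1 \<alpha>(h)\<close> centralizes \<open>\<alpha>(x)\<close>; since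
  \<open>h \<mapsto> h\<^sup>-\<^sup>1 \<alpha>(h)\<close> has fibres of size \<open>|F|\<close>, at most \<open>|F| |C(y)|\<close> elements conjugate a
  given \<open>y\<close> into \<open>S\<close>. Double counting pairs \<open>(g, y)\<close> with \<open>g y g\<^sup>-\<^sup>1 \<in> S\<close>
  then gives \<open>|F| |S|\<^sup>2 \<le> |S| |G| \<le> |F| \<Sum>\<^sub>y |C(y)|\<close>, and the last sum counts commuting pairs.\<close>

definition centralizer :: "('a, 'b) monoid_scheme \<Rightarrow> 'a \<Rightarrow> 'a set" where
  "centralizer G y = {g \<in> carrier G. y \<otimes>\<^bsub>G\<^esub> g = g \<otimes>\<^bsub>G\<^esub> y}"

definition fixed_points :: "('a, 'b) monoid_scheme \<Rightarrow> ('a \<Rightarrow> 'a) \<Rightarrow> 'a set" where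
  "fixed_points G \<alpha> = {g \<in> carrier G. \<alpha> g = g}"

definition cube_points :: "('a, 'b) monoid_scheme \<Rightarrow> ('a \<Rightarrow> 'a) \<Rightarrow> 'a set" where
  "cube_points G \<alpha> = {g \<in> carrier G. \<alpha> g = g \<otimes>\<^bsub>G\<^esub> g \<otimes>\<^bsub>G\<^esub> g}"

context group
begin

lemma inv_m_cancel_left [simp]:
  "x \<in> carrier G \<Longrightarrow> y \<in> carrier G \<Longrightarrow> inv x \<otimes> (x \<otimes> y) = y"
  by (simp flip: m_assoc)

lemma m_inv_cancel_left [simp]:
  "x \<in> carrier G \<Longrightarrow> y \<in> carrier G \<Longrightarrow> x \<otimes> (inv x \<otimes> y) = y"
  by (simp flip: m_assoc)

lemma square_inj_odd_order:
  assumes "finite (carrier G)" and "odd (order G)"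
    and x: "x \<in> carrier G" and y: "y \<in> carrier G" and "x \<otimes> x = y \<otimes> y"
  shows "x = y"
proof -
  obtain k where k: "order G = 2 * k + 1" using \<open>odd (order G)\<close> oddE by blast
  have root: "z = (z \<otimes> z) [^] (k + 1)" if z: "z \<in> carrier G" for z
  proof -
    have "(z \<otimes> z) [^] (k + 1) = z [^] (2 * (k + 1))"
      using z nat_pow_pow[of z 2 "k + 1"] by (simp add: numeral_2_eq_2)
    also have "\<dots> = z [^] order G \<otimes> z" by (simp add: k)
    also have "\<dots> = z" using z \<open>finite (carrier G)\<close> by (simp add: pow_order_eq_1)
    finally show ?thesis by simp
  qed
  show ?thesis using root[OF x] root[OF y] \<open>x \<otimes> x = y \<otimes> y\<close> by simp
qed

lemma conjugation_iso:
  assumes g: "g \<in> carrier G"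
  shows "(\<lambda>x. g \<otimes> x \<otimes> inv g) \<in> iso G G"
proof -
  have "(\<lambda>x. g \<otimes> x \<otimes> inv g) \<in> hom G G"
  proof (rule homI)
    fix x y assume "x \<in> carrier G" "y \<in> carrier G"
    then show "g \<otimes> (x \<otimes> y) \<otimes> inv g = g \<otimes> x \<otimes> inv g \<otimes> (g \<otimes> y \<otimes> inv g)"
      using g by (simp add: m_assoc)
  qed (use g in simp)
  moreover have "bij_betw (\<lambda>x. g \<otimes> x \<otimes> inv g) (carrier G) (carrier G)"
  proof (rule bij_betwI')
    fix z assume z: "z \<in> carrier G"
    then have "z = g \<otimes> (inv g \<otimes> z \<otimes> g) \<otimes> inv g" using g by (simp add: m_assoc)
    then show "\<exists>x\<in>carrier G. z = g \<otimes> x \<otimes> inv g" using g z by blast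
  qed (use g in auto)
  ultimately show ?thesis by (simp add: iso_def)
qed

lemma centralizer_iso_image:
  assumes \<beta>: "\<beta> \<in> iso G G" and y: "y \<in> carrier G"
  shows "centralizer G (\<beta> y) = \<beta> ` centralizer G y"
proof
  have hom: "\<beta> \<in> hom G G" using \<beta> by (simp add: iso_def)
  show "\<beta> ` centralizer G y \<subseteq> centralizer G (\<beta> y)"
    using hom y by (auto simp: centralizer_def hom_in_carrier simp flip: hom_mult)
  show "centralizer G (\<beta> y) \<subseteq> \<beta> ` centralizer G y"
  proof
    fix d assume d: "d \<in> centralizer G (\<beta> y)"
    then obtain c where c: "c \<in> carrier G" and dc: "d = \<beta> c"
      using \<beta> by (auto simp: centralizer_def iso_def bij_betw_def)
    have "\<beta> (y \<otimes> c) = \<beta> (c \<otimes> y)"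
      using d hom c y by (simp add: dc centralizer_def hom_mult)
    then have "y \<otimes> c = c \<otimes> y"
      using \<beta> c y by (auto simp: iso_def bij_betw_def inj_on_def)
    then show "d \<in> \<beta> ` centralizer G y" using c dc by (auto simp: centralizer_def)
  qed
qed

lemma card_centralizer_iso:
  assumes "\<beta> \<in> iso G G" and "y \<in> carrier G"
  shows "card (centralizer G (\<beta> y)) = card (centralizer G y)"
proof -
  have "inj_on \<beta> (centralizer G y)"
    using assms(1) by (auto simp: iso_def bij_betw_def centralizer_def intro: inj_on_subset)
  then show ?thesis using centralizer_iso_image[OF assms] by (simp add: card_image)
qed

lemma card_commuting_pairs:
  assumes "finite (carrier G)"
  shows "card {(x, y). x \<in> carrier G \<and> y \<in> carrier G \<and> x \<otimes> y = y \<otimes> x}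
       = (\<Sum>y\<in>carrier G. card (centralizer G y))"
proof -
  have "{(x, y). x \<in> carrier G \<and> y \<in> carrier G \<and> x \<otimes> y = y \<otimes> x}
      = Sigma (carrier G) (centralizer G)"
    by (auto simp: centralizer_def)
  then show ?thesis using assms by (simp add: centralizer_def)
qed

text \<open>The fibre of \<open>h \<mapsto> h\<^sup>-\<^sup>1 \<alpha>(h)\<close> through \<open>k\<close> is the coset \<open>F k\<close> of the fixed points.\<close>

lemma card_twisted_fibre_le:
  assumes fin: "finite (carrier G)" and \<alpha>: "\<alpha> \<in> hom G G"
  shows "card {h \<in> carrier G. inv h \<otimes> \<alpha> h = b} \<le> card (fixed_points G \<alpha>)"
proof (cases "{h \<in> carrier G. inv h \<otimes> \<alpha> h = b} = {}")
  case True
  then show ?thesis by (simp only: card.empty zero_le)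
next
  case False
  then obtain k where k: "k \<in> carrier G" and kb: "inv k \<otimes> \<alpha> k = b" by blast
  interpret \<alpha>: group_hom G G \<alpha>
    using \<alpha> by (simp add: group_hom_def group_hom_axioms_def is_group)
  have "{h \<in> carrier G. inv h \<otimes> \<alpha> h = b} \<subseteq> (\<lambda>f. f \<otimes> k) ` fixed_points G \<alpha>"
  proof
    fix h assume "h \<in> {h \<in> carrier G. inv h \<otimes> \<alpha> h = b}"
    then have h: "h \<in> carrier G" and hb: "inv h \<otimes> \<alpha> h = inv k \<otimes> \<alpha> k" using kb by auto
    have "\<alpha> (h \<otimes> inv k) = h \<otimes> inv k"
    proof -
      have "\<alpha> h = h \<otimes> (inv k \<otimes> \<alpha> k)" using h \<alpha> by (simp add: hom_in_carrier flip: hb)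
      then show ?thesis using h k \<alpha> by (simp add: m_assoc)
    qed
    then show "h \<in> (\<lambda>f. f \<otimes> k) ` fixed_points G \<alpha>"
      using h k by (intro image_eqI[of _ _ "h \<otimes> inv k"]) (auto simp: m_assoc fixed_points_def)
  qed
  moreover have "inj_on (\<lambda>f. f \<otimes> k) (fixed_points G \<alpha>)"
    using k by (auto simp: inj_on_def fixed_points_def)
  moreover have "finite (fixed_points G \<alpha>)" using fin by (simp add: fixed_points_def)
  ultimately show ?thesis by (metis (no_types, lifting) card_image card_mono finite_imageI)
qed

lemma card_twisted_preimage_le:
  assumes fin: "finite (carrier G)" and \<alpha>: "\<alpha> \<in> hom G G" and B: "B \<subseteq> carrier G"
  shows "card {h \<in> carrier G. inv h \<otimes> \<alpha> h \<in> B} \<le> card (fixed_points G \<alpha>) * card B"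
proof -
  have "{h \<in> carrier G. inv h \<otimes> \<alpha> h \<in> B} = (\<Union>b\<in>B. {h \<in> carrier G. inv h \<otimes> \<alpha> h = b})"
    by blast
  also have "card \<dots> \<le> (\<Sum>b\<in>B. card {h \<in> carrier G. inv h \<otimes> \<alpha> h = b})"
    using B fin by (intro card_UN_le) (rule finite_subset)
  also have "\<dots> \<le> (\<Sum>b\<in>B. card (fixed_points G \<alpha>))"
    by (intro sum_mono card_twisted_fibre_le fin \<alpha>)
  finally show ?thesis by (simp add: mult.commute)
qed

lemma card_cube_points_mult_card_fixed_points_le:
  assumes fin: "finite (carrier G)" and odd: "odd (order G)" and \<alpha>: "\<alpha> \<in> hom G G"
  shows "card (cube_points G \<alpha>) * card (fixed_points G \<alpha>) \<le> order G"
proof -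
  have "inj_on (\<lambda>(s, f). s \<otimes> f) (cube_points G \<alpha> \<times> fixed_points G \<alpha>)"
  proof (rule inj_onI, clarify)
    fix s f s' f'
    assume "s \<in> cube_points G \<alpha>" "f \<in> fixed_points G \<alpha>" "s' \<in> cube_points G \<alpha>" "f' \<in> fixed_points G \<alpha>"
      and e: "s \<otimes> f = s' \<otimes> f'"
    then have c: "s \<in> carrier G" "f \<in> carrier G" "s' \<in> carrier G" "f' \<in> carrier G"
      and as: "\<alpha> s = s \<otimes> s \<otimes> s" "\<alpha> s' = s' \<otimes> s' \<otimes> s'" and af: "\<alpha> f = f" "\<alpha> f' = f'"
      by (auto simp: cube_points_def fixed_points_def)
    have "s \<otimes> s \<otimes> (s \<otimes> f) = \<alpha> (s \<otimes> f)" using c as af \<alpha> by (simp add: hom_mult m_assoc)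
    also have "\<dots> = s' \<otimes> s' \<otimes> (s' \<otimes> f')" using c as af \<alpha> e by (simp add: hom_mult m_assoc)
    also have "\<dots> = s' \<otimes> s' \<otimes> (s \<otimes> f)" using e by simp
    finally have "s \<otimes> s = s' \<otimes> s'" using c by simp
    then have "s = s'" using square_inj_odd_order[OF fin odd] c by blast
    then show "s = s' \<and> f = f'" using e c by simp
  qed
  moreover have "(\<lambda>(s, f). s \<otimes> f) ` (cube_points G \<alpha> \<times> fixed_points G \<alpha>) \<subseteq> carrier G"
    by (auto simp: cube_points_def fixed_points_def)
  ultimately have "card (cube_points G \<alpha> \<times> fixed_points G \<alpha>) \<le> order G"
    unfolding order_def using fin by (rule card_inj_on_le)
  then show ?thesis by (simp add: card_cartesian_product)
qed

lemma twisted_mem_centralizer: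
  assumes \<alpha>: "\<alpha> \<in> hom G G" and h: "h \<in> carrier G"
    and x: "x \<in> cube_points G \<alpha>" and hx: "h \<otimes> x \<otimes> inv h \<in> cube_points G \<alpha>"
  shows "inv h \<otimes> \<alpha> h \<in> centralizer G (\<alpha> x)"
proof -
  interpret \<alpha>: group_hom G G \<alpha>
    using \<alpha> by (simp add: group_hom_def group_hom_axioms_def is_group)
  have xc: "x \<in> carrier G" and ax: "\<alpha> x = x \<otimes> x \<otimes> x"
    using x by (auto simp: cube_points_def)
  have "\<alpha> h \<otimes> \<alpha> x \<otimes> inv (\<alpha> h) = \<alpha> (h \<otimes> x \<otimes> inv h)"
    using h xc by simp
  also have "\<dots> = h \<otimes> x \<otimes> inv h \<otimes> (h \<otimes> x \<otimes> inv h) \<otimes> (h \<otimes> x \<otimes> inv h)"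
    using hx by (simp add: cube_points_def)
  also have "\<dots> = h \<otimes> \<alpha> x \<otimes> inv h"
    using h xc ax by (simp add: m_assoc)
  finally have "inv h \<otimes> (\<alpha> h \<otimes> \<alpha> x \<otimes> inv (\<alpha> h)) \<otimes> \<alpha> h = inv h \<otimes> (h \<otimes> \<alpha> x \<otimes> inv h) \<otimes> \<alpha> h"
    by simp
  then show ?thesis
    using h xc by (simp add: centralizer_def m_assoc)
qed

lemma card_conjugators_into_cube_points_le:
  assumes fin: "finite (carrier G)" and \<alpha>: "\<alpha> \<in> iso G G" and y: "y \<in> carrier G"
  shows "card {g \<in> carrier G. g \<otimes> y \<otimes> inv g \<in> cube_points G \<alpha>}
       \<le> card (fixed_points G \<alpha>) * card (centralizer G y)"
proof (cases "{g \<in> carrier G. g \<otimes> y \<otimes> inv g \<in> cube_points G \<alpha>} = {}")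
  case True
  then show ?thesis by (simp only: card.empty zero_le)
next
  case False
  then obtain g0 where g0: "g0 \<in> carrier G" and x0: "g0 \<otimes> y \<otimes> inv g0 \<in> cube_points G \<alpha>"
    by blast
  have hom: "\<alpha> \<in> hom G G" using \<alpha> by (simp add: iso_def)
  let ?x0 = "g0 \<otimes> y \<otimes> inv g0"
  let ?H = "{h \<in> carrier G. inv h \<otimes> \<alpha> h \<in> centralizer G (\<alpha> ?x0)}"
  have "(\<lambda>g. g \<otimes> inv g0) ` {g \<in> carrier G. g \<otimes> y \<otimes> inv g \<in> cube_points G \<alpha>} \<subseteq> ?H"
  proof (rule image_subsetI)
    fix g assume "g \<in> {g \<in> carrier G. g \<otimes> y \<otimes> inv g \<in> cube_points G \<alpha>}"
    then have g: "g \<in> carrier G" and gy: "g \<otimes> y \<otimes> inv g \<in> cube_points G \<alpha>" by auto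
    have "g \<otimes> inv g0 \<otimes> ?x0 \<otimes> inv (g \<otimes> inv g0) = g \<otimes> y \<otimes> inv g"
      using g g0 y by (simp add: m_assoc inv_mult_group)
    then show "g \<otimes> inv g0 \<in> ?H"
      using twisted_mem_centralizer[OF hom _ x0, of "g \<otimes> inv g0"] g g0 gy by simp
  qed
  moreover have "inj_on (\<lambda>g. g \<otimes> inv g0) {g \<in> carrier G. g \<otimes> y \<otimes> inv g \<in> cube_points G \<alpha>}"
    using g0 by (auto simp: inj_on_def)
  moreover have "finite ?H" using fin by simp
  ultimately have "card {g \<in> carrier G. g \<otimes> y \<otimes> inv g \<in> cube_points G \<alpha>} \<le> card ?H"
    by (metis (no_types, lifting) card_image card_mono)
  also have "\<dots> \<le> card (fixed_points G \<alpha>) * card (centralizer G (\<alpha> ?x0))"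
    using fin hom by (rule card_twisted_preimage_le) (simp add: centralizer_def)
  also have "card (centralizer G (\<alpha> ?x0)) = card (centralizer G y)"
    using g0 y \<alpha> by (simp add: card_centralizer_iso conjugation_iso[OF g0, THEN card_centralizer_iso])
  finally show ?thesis .
qed

lemma card_mult_order_eq_sum_conjugators:
  assumes fin: "finite (carrier G)" and A: "A \<subseteq> carrier G"
  shows "card A * order G = (\<Sum>y\<in>carrier G. card {g \<in> carrier G. g \<otimes> y \<otimes> inv g \<in> A})"
proof -
  have conj_preimage: "card {y \<in> carrier G. g \<otimes> y \<otimes> inv g \<in> A} = card A" if g: "g \<in> carrier G" for g
  proof -
    have "{y \<in> carrier G. g \<otimes> y \<otimes> inv g \<in> A} = (\<lambda>x. inv g \<otimes> x \<otimes> g) ` A"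
    proof (intro equalityI subsetI)
      fix y assume "y \<in> {y \<in> carrier G. g \<otimes> y \<otimes> inv g \<in> A}"
      then show "y \<in> (\<lambda>x. inv g \<otimes> x \<otimes> g) ` A"
        using g by (intro image_eqI[of _ _ "g \<otimes> y \<otimes> inv g"]) (auto simp: m_assoc)
    qed (use g A in \<open>auto simp: m_assoc\<close>)
    moreover have "inj_on (\<lambda>x. inv g \<otimes> x \<otimes> g) A"
    proof (rule inj_onI)
      fix x x' assume "x \<in> A" "x' \<in> A" and "inv g \<otimes> x \<otimes> g = inv g \<otimes> x' \<otimes> g"
      moreover have "x \<in> carrier G" "x' \<in> carrier G" using A \<open>x \<in> A\<close> \<open>x' \<in> A\<close> by auto
      ultimately show "x = x'" using g by (simp add: m_assoc)
    qed
    ultimately show ?thesis by (simp add: card_image)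
  qed
  have count: "card {x \<in> carrier G. P x} = (\<Sum>x\<in>carrier G. if P x then 1 else 0)" for P
    using fin by (simp flip: sum.inter_filter)
  have "card A * order G = (\<Sum>g\<in>carrier G. card {y \<in> carrier G. g \<otimes> y \<otimes> inv g \<in> A})"
    by (simp add: conj_preimage order_def)
  also have "\<dots> = (\<Sum>y\<in>carrier G. card {g \<in> carrier G. g \<otimes> y \<otimes> inv g \<in> A})"
    unfolding count by (rule sum.swap)
  finally show ?thesis .
qed

lemma card_cube_points_squared_le:
  assumes fin: "finite (carrier G)" and odd: "odd (order G)" and \<alpha>: "\<alpha> \<in> iso G G"
  shows "card (cube_points G \<alpha>) ^ 2
       \<le> card {(x, y). x \<in> carrier G \<and> y \<in> carrier G \<and> x \<otimes> y = y \<otimes> x}"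
proof -
  let ?S = "card (cube_points G \<alpha>)" and ?F = "card (fixed_points G \<alpha>)"
    and ?N = "card {(x, y). x \<in> carrier G \<and> y \<in> carrier G \<and> x \<otimes> y = y \<otimes> x}"
  have hom: "\<alpha> \<in> hom G G" using \<alpha> by (simp add: iso_def)
  have "?S * (?S * ?F) \<le> ?S * order G"
    using card_cube_points_mult_card_fixed_points_le[OF fin odd hom] by (rule mult_le_mono2)
  then have "?F * ?S ^ 2 \<le> ?S * order G" by (simp add: power2_eq_square ac_simps)
  also have "\<dots> = (\<Sum>y\<in>carrier G. card {g \<in> carrier G. g \<otimes> y \<otimes> inv g \<in> cube_points G \<alpha>})"
    using fin by (rule card_mult_order_eq_sum_conjugators) (auto simp: cube_points_def)
  also have "\<dots> \<le> (\<Sum>y\<in>carrier G. ?F * card (centralizer G y))"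
    by (intro sum_mono card_conjugators_into_cube_points_le fin \<alpha>)
  also have "\<dots> = ?F * ?N"
    using fin by (simp add: card_commuting_pairs sum_distrib_left)
  finally have "?F * ?S ^ 2 \<le> ?F * ?N" .
  moreover have "\<one> \<in> fixed_points G \<alpha>" using hom by (simp add: fixed_points_def hom_one)
  then have "?F > 0" using fin by (auto simp: fixed_points_def card_gt_0_iff)
  ultimately show ?thesis by simp
qed

lemma int_pow_three: "g \<in> carrier G \<Longrightarrow> g [^] (3::int) = g \<otimes> g \<otimes> g"
  using int_pow_int[of G g 3] by (simp add: numeral_3_eq_3)

end

lemma lambda_e_attained:
  assumes fin: "finite (carrier G)"
  obtains \<alpha> where "\<alpha> \<in> iso G G"
    and "lambda_e e G = real (card {g \<in> carrier G. \<alpha> g = g [^]\<^bsub>G\<^esub> e}) / real (card (carrier G))"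
proof -
  define ratio where
    "ratio \<alpha> = real (card {g \<in> carrier G. \<alpha> g = g [^]\<^bsub>G\<^esub> e}) / real (card (carrier G))" for \<alpha>
  let ?n = "card (carrier G)"
  have "ratio ` iso G G \<subseteq> (\<lambda>k. real k / real ?n) ` {0..?n}"
  proof (rule image_subsetI)
    fix \<alpha>
    have "card {g \<in> carrier G. \<alpha> g = g [^]\<^bsub>G\<^esub> e} \<le> ?n" using fin by (intro card_mono) auto
    then show "ratio \<alpha> \<in> (\<lambda>k. real k / real ?n) ` {0..?n}" by (auto simp: ratio_def)
  qed
  then have "finite (ratio ` iso G G)" by (rule finite_subset) simp
  moreover have "ratio ` iso G G \<noteq> {}" using id_iso by blast
  ultimately have "lambda_e e G \<in> ratio ` iso G G"
    unfolding lambda_e_def ratio_def[abs_def] by (rule Max_in)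
  then show ?thesis using that by (auto simp: ratio_def)
qed

theorem proposition7:
  fixes G :: "('a, 'b) monoid_scheme"
  assumes "group G" and "finite (carrier G)" and "odd (order G)"
  shows "comm_prob G \<ge> (lambda_e 3 G) ^ 2"
proof -
  interpret group G by fact
  obtain \<alpha> where \<alpha>: "\<alpha> \<in> iso G G"
    and lam: "lambda_e 3 G = real (card {g \<in> carrier G. \<alpha> g = g [^]\<^bsub>G\<^esub> (3::int)}) / real (card (carrier G))"
    using lambda_e_attained[OF assms(2)] by blast
  have "{g \<in> carrier G. \<alpha> g = g [^]\<^bsub>G\<^esub> (3::int)} = cube_points G \<alpha>"
    by (auto simp: cube_points_def int_pow_three)
  then have "(lambda_e 3 G) ^ 2 = real (card (cube_points G \<alpha>) ^ 2) / real (card (carrier G)) ^ 2"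
    by (simp add: lam power_divide)
  also have "\<dots> \<le> real (card {(x, y). x \<in> carrier G \<and> y \<in> carrier G \<and> x \<otimes>\<^bsub>G\<^esub> y = y \<otimes>\<^bsub>G\<^esub> x})
                   / real (card (carrier G)) ^ 2"
    using card_cube_points_squared_le[OF assms(2,3) \<alpha>] by (intro divide_right_mono) simp_all
  also have "\<dots> = comm_prob G" by (simp add: comm_prob_def)
  finally show ?thesis .
qed

end
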